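(* Let $k$ and $s$ be integers with $1\leq s\leq k$, and let $G$ be a connected cograph on at least $k+s+2$ vertices that has no $k$-dense $(k+s+2)$-set. Then there exists a set $L$ of vertices of $G$ with $1\leq |L|\leq s$ such that every vertex of $L$ is adjacent to every vertex of $V(G)\setminus L$.
   Context: All graphs are finite and simple. For a graph $G$ and a nonnegative integer $k$, a $k$-sparse set is a set of vertices inducing a subgraph of maximum degree at most $k$; a $k$-dense $i$-set is a set of $i$ vertices of $G$ that is $k$-sparse in the complement of $G$. A cograph is a graph containing no induced path on four vertices (equivalently, the complement of every connected induced subgraph on at least two vertices is disconnected). *)

theory Defs
  imports Main
begin

definition simple_graph :: "'a set \<Rightarrow> ('a \<Rightarrow> 'a \<Rightarrow> bool) \<Rightarrow> bool" where
  "simple_graph V E \<longleftrightarrow> finite V \<and> (\<forall>u v. E u v \<longrightarrow> u \<in> V \<and> v \<in> V)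
     \<and> (\<forall>u v. E u v \<longrightarrow> E v u) \<and> (\<forall>v. \<not> E v v)"

definition connected_graph :: "'a set \<Rightarrow> ('a \<Rightarrow> 'a \<Rightarrow> bool) \<Rightarrow> bool" where
  "connected_graph V E \<longleftrightarrow> (\<forall>u\<in>V. \<forall>v\<in>V. (\<lambda>x y. x \<in> V \<and> y \<in> V \<and> E x y)\<^sup>*\<^sup>* u v)"

definition cograph :: "'a set \<Rightarrow> ('a \<Rightarrow> 'a \<Rightarrow> bool) \<Rightarrow> bool" where
  "cograph V E \<longleftrightarrow> \<not> (\<exists>a\<in>V. \<exists>b\<in>V. \<exists>c\<in>V. \<exists>d\<in>V. distinct [a,b,c,d] \<and>
      E a b \<and> E b c \<and> E c d \<and> \<not> E a c \<and> \<not> E b d \<and> \<not> E a d)"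

definition compl_graph :: "'a set \<Rightarrow> ('a \<Rightarrow> 'a \<Rightarrow> bool) \<Rightarrow> 'a \<Rightarrow> 'a \<Rightarrow> bool" where
  "compl_graph V E u v \<longleftrightarrow> u \<in> V \<and> v \<in> V \<and> u \<noteq> v \<and> \<not> E u v"

definition k_sparse :: "'a set \<Rightarrow> ('a \<Rightarrow> 'a \<Rightarrow> bool) \<Rightarrow> nat \<Rightarrow> 'a set \<Rightarrow> bool" where
  "k_sparse V E k S \<longleftrightarrow> S \<subseteq> V \<and> (\<forall>v\<in>S. card {u\<in>S. E v u} \<le> k)"

definition k_dense_set :: "'a set \<Rightarrow> ('a \<Rightarrow> 'a \<Rightarrow> bool) \<Rightarrow> nat \<Rightarrow> nat \<Rightarrow> 'a set \<Rightarrow> bool" where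
  "k_dense_set V E k i S \<longleftrightarrow> card S = i \<and> k_sparse V (compl_graph V E) k S"

end

theory Submission
  imports Defs
begin

text \<open>
  The heart of the matter is Seinsche's theorem: a cograph on at least two vertices is
  disconnected or has a disconnected complement. Hence our connected cograph splits into
  two nonempty vertex sets \<open>L\<close> and \<open>V - L\<close> with every edge between them present.
  If neither side has at most \<open>s\<close> vertices, take up to \<open>k + 1\<close> vertices from each side,
  \<open>k + s + 2\<close> in total; a vertex of such a set misses only vertices of its own side,
  so the set is \<open>k\<close>-dense.

  Seinsche's theorem is proved by deleting a vertex \<open>v\<close>. If \<open>v\<close> has a neighbour and a
  non-neighbour, then by induction \<open>G - v\<close> or its complement is disconnected, and in a
  connected cograph a vertex whose deletion disconnects the graph is adjacent to all other
  vertices (otherwise an induced \<open>P\<^sub>4\<close> appears); applied to \<open>G\<close> or to its complement,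
  this contradicts the choice of \<open>v\<close>.
\<close>

lemma rtranclp_leaves_set:
  assumes "r\<^sup>*\<^sup>* x z" "x \<in> A" "z \<notin> A"
  obtains p q where "r\<^sup>*\<^sup>* x p" "p \<in> A" "q \<notin> A" "r p q"
  using assms
proof (induction arbitrary: thesis rule: rtranclp_induct)
  case base
  then show ?case by simp
next
  case (step y z)
  then show ?case by blast
qed

abbreviation induced :: "'a set \<Rightarrow> ('a \<Rightarrow> 'a \<Rightarrow> bool) \<Rightarrow> 'a \<Rightarrow> 'a \<Rightarrow> bool" where
  "induced V R \<equiv> \<lambda>x y. x \<in> V \<and> y \<in> V \<and> R x y"

definition component :: "'a set \<Rightarrow> ('a \<Rightarrow> 'a \<Rightarrow> bool) \<Rightarrow> 'a \<Rightarrow> 'a set" where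
  "component V R u = {x \<in> V. (induced V R)\<^sup>*\<^sup>* u x}"

lemma self_in_component: "u \<in> V \<Longrightarrow> u \<in> component V R u"
  unfolding component_def by simp

lemma component_closed:
  assumes "x \<in> component V R u" "y \<in> V" "R x y"
  shows "y \<in> component V R u"
  using assms unfolding component_def by (auto intro: rtranclp.rtrancl_into_rtrancl)

lemma not_connected_graph_component:
  assumes "symp R" "\<not> connected_graph V R" "u \<in> V"
  obtains w where "w \<in> V" "w \<notin> component V R u"
proof -
  obtain a b where ab: "a \<in> V" "b \<in> V" "\<not> (induced V R)\<^sup>*\<^sup>* a b"
    using assms(2) unfolding connected_graph_def by blast
  have "symp (induced V R)\<^sup>*\<^sup>*"
    using assms(1) by (intro symp_rtranclp) (auto intro: sympI dest: sympD)
  then have "\<not> (a \<in> component V R u \<and> b \<in> component V R u)"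
    using ab unfolding component_def by (blast dest: sympD intro: rtranclp_trans)
  then show thesis using that ab by blast
qed

lemma not_connected_graph_if_isolated:
  assumes "v \<in> V" "u \<in> V - {v}" "\<forall>q \<in> V - {v}. \<not> R v q"
  shows "\<not> connected_graph V R"
proof
  assume "connected_graph V R"
  then have "(induced V R)\<^sup>*\<^sup>* v u"
    using assms unfolding connected_graph_def by blast
  then obtain p q where "p \<in> {v}" "q \<notin> {v}" "induced V R p q"
    by (rule rtranclp_leaves_set[where A = "{v}"]) (use assms(2) in auto)
  then show False using assms(3) by auto
qed

lemma connected_graph_neighbour_in_closed_set:
  assumes "connected_graph V R" "v \<in> V" "C \<subseteq> V - {v}" "x \<in> C"
    and closed: "\<forall>y \<in> C. \<forall>z \<in> V - {v}. R y z \<longrightarrow> z \<in> C"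
  obtains p where "p \<in> C" "R p v"
proof -
  have "(induced V R)\<^sup>*\<^sup>* x v"
    using assms unfolding connected_graph_def by blast
  then obtain p q where "p \<in> C" "q \<notin> C" "induced V R p q"
    by (rule rtranclp_leaves_set[where A = C]) (use assms(3,4) in auto)
  moreover from this closed have "q = v" by blast
  ultimately show thesis using that by blast
qed

lemma cographD:
  assumes "cograph V R" "a \<in> V" "b \<in> V" "c \<in> V" "d \<in> V" "distinct [a, b, c, d]"
    "R a b" "R b c" "R c d" "\<not> R a c" "\<not> R b d" "\<not> R a d"
  shows False
  using assms unfolding cograph_def by blast

lemma cograph_subset: "cograph V R \<Longrightarrow> V' \<subseteq> V \<Longrightarrow> cograph V' R"
  unfolding cograph_def by blast

lemma symp_compl_graph: "symp R \<Longrightarrow> symp (compl_graph V R)"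
  unfolding compl_graph_def by (auto intro: sympI dest: sympD)

lemma irreflp_compl_graph: "irreflp (compl_graph V R)"
  unfolding compl_graph_def by (auto intro: irreflpI)

lemma cograph_compl_graph:
  assumes "cograph V R" "symp R"
  shows "cograph V (compl_graph V R)"
  unfolding cograph_def
proof (intro notI, elim bexE conjE)
  fix a b c d
  assume "a \<in> V" "b \<in> V" "c \<in> V" "d \<in> V" "distinct [a, b, c, d]"
    "compl_graph V R a b" "compl_graph V R b c" "compl_graph V R c d"
    "\<not> compl_graph V R a c" "\<not> compl_graph V R b d" "\<not> compl_graph V R a d"
  moreover from this have "R c a" "R a d" "R d b" "\<not> R c d" "\<not> R a b" "\<not> R c b"
    using \<open>symp R\<close> unfolding compl_graph_def by (auto dest: sympD)
  \<comment> \<open>the complement of the path \<open>a b c d\<close> is the path \<open>c a d b\<close>\<close>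
  ultimately show False
    using cographD[OF assms(1), of c a d b] by (auto dest: sympD[OF \<open>symp R\<close>])
qed

lemma connected_graph_compl_graph_subset:
  assumes "V' \<subseteq> V"
  shows "connected_graph V' (compl_graph V R) \<longleftrightarrow> connected_graph V' (compl_graph V' R)"
proof -
  have "induced V' (compl_graph V R) = induced V' (compl_graph V' R)"
    using assms by (auto simp: compl_graph_def fun_eq_iff)
  then show ?thesis unfolding connected_graph_def by simp
qed

lemma cograph_cut_vertex_dominating:
  assumes "symp R" "irreflp R" "cograph V R" "connected_graph V R"
    and v: "v \<in> V" and cut: "\<not> connected_graph (V - {v}) R"
    and u: "u \<in> V - {v}"
  shows "R v u"
proof (rule ccontr)
  assume "\<not> R v u"
  define V' where "V' = V - {v}"
  define C where "C = component V' R u"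
  have "C \<subseteq> V'"
    unfolding C_def component_def by blast
  have "u \<in> C"
    unfolding C_def V'_def using u by (rule self_in_component)
  have C_closed: "\<forall>y \<in> C. \<forall>z \<in> V'. R y z \<longrightarrow> z \<in> C"
    unfolding C_def using component_closed by fast
  have rest_closed: "\<forall>y \<in> V' - C. \<forall>z \<in> V'. R y z \<longrightarrow> z \<in> V' - C"
    using C_closed sympD[OF \<open>symp R\<close>] by blast
  obtain w where "w \<in> V'" "w \<notin> C"
    by (rule not_connected_graph_component[OF \<open>symp R\<close> cut u, folded V'_def C_def])
  obtain p where "p \<in> C" "R p v"
    by (rule connected_graph_neighbour_in_closed_set[OF \<open>connected_graph V R\<close> v, of C u])
      (use \<open>C \<subseteq> V'\<close> \<open>u \<in> C\<close> C_closed in \<open>auto simp: V'_def\<close>)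
  obtain p' where p': "p' \<in> V' - C" "R p' v"
    by (rule connected_graph_neighbour_in_closed_set[OF \<open>connected_graph V R\<close> v, of "V' - C" w])
      (use \<open>w \<in> V'\<close> \<open>w \<notin> C\<close> rest_closed in \<open>auto simp: V'_def\<close>)
  \<comment> \<open>a walk in \<open>C\<close> from \<open>u\<close> to \<open>p\<close> has an edge \<open>z x\<close> with \<open>\<not> R z v\<close> and \<open>R x v\<close>;
    then \<open>z x v p'\<close> is an induced \<open>P\<^sub>4\<close>\<close>
  have "(induced V' R)\<^sup>*\<^sup>* u p"
    using \<open>p \<in> C\<close> unfolding C_def component_def by simp
  then obtain z x where zx: "(induced V' R)\<^sup>*\<^sup>* u z" "\<not> R z v" "R x v" "induced V' R z x"
    by (rule rtranclp_leaves_set[where A = "{t. \<not> R t v}"])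
      (use \<open>\<not> R v u\<close> sympD[OF \<open>symp R\<close>, of u v] \<open>R p v\<close> in auto)
  then have "z \<in> C"
    unfolding C_def component_def by simp
  then have "x \<in> C"
    using C_closed zx(4) by blast
  have "\<not> R z p'" "\<not> R x p'"
    using C_closed p' \<open>z \<in> C\<close> \<open>x \<in> C\<close> by blast+
  moreover have "distinct [z, x, v, p']"
    using \<open>z \<in> C\<close> \<open>x \<in> C\<close> \<open>C \<subseteq> V'\<close> p' zx irreflpD[OF \<open>irreflp R\<close>]
    unfolding V'_def by auto
  moreover have "z \<in> V" "x \<in> V" "p' \<in> V"
    using \<open>z \<in> C\<close> \<open>x \<in> C\<close> \<open>C \<subseteq> V'\<close> p' unfolding V'_def by auto
  ultimately show False
    using cographD[OF \<open>cograph V R\<close> _ _ v, of z x p'] zx sympD[OF \<open>symp R\<close> \<open>R p' v\<close>]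
    by auto
qed

lemma cograph_remove_vertex_connected:
  assumes "symp R" "irreflp R" "cograph V R"
    and "connected_graph V R" "connected_graph V (compl_graph V R)"
    and v: "v \<in> V" and "u1 \<in> V - {v}" "u2 \<in> V - {v}" "R v u1" "\<not> R v u2"
  shows "connected_graph (V - {v}) R" "connected_graph (V - {v}) (compl_graph (V - {v}) R)"
proof -
  show "connected_graph (V - {v}) R"
    using cograph_cut_vertex_dominating[OF assms(1-4) v] assms(8,10) by blast
  have "\<not> compl_graph V R v u1"
    using \<open>R v u1\<close> unfolding compl_graph_def by blast
  then have "connected_graph (V - {v}) (compl_graph V R)"
    using cograph_cut_vertex_dominating[OF symp_compl_graph[OF assms(1)] irreflp_compl_graph
        cograph_compl_graph[OF assms(3,1)] assms(5) v] assms(7) by blast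
  then show "connected_graph (V - {v}) (compl_graph (V - {v}) R)"
    using connected_graph_compl_graph_subset[of "V - {v}" V] by blast
qed

theorem cograph_connected_imp_compl_not_connected:
  assumes "finite V" "2 \<le> card V" "symp R" "irreflp R" "cograph V R" "connected_graph V R"
  shows "\<not> connected_graph V (compl_graph V R)"
  using assms
proof (induction "card V" arbitrary: V rule: less_induct)
  case less
  obtain v where v: "v \<in> V"
    using less.prems(2) by fastforce
  have card_V': "card (V - {v}) = card V - 1"
    using v by simp
  then have "0 < card (V - {v})"
    using less.prems(2) by linarith
  then obtain u where u: "u \<in> V - {v}"
    by (metis card.empty ex_in_conv less_irrefl)
  consider (dominating) "\<forall>q \<in> V - {v}. R v q" | (isolated) "\<forall>q \<in> V - {v}. \<not> R v q"
    | (mixed) u1 u2 where "u1 \<in> V - {v}" "u2 \<in> V - {v}" "R v u1" "\<not> R v u2"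
    by blast
  then show ?case
  proof cases
    case dominating
    then show ?thesis
      by (intro not_connected_graph_if_isolated[OF v u]) (simp add: compl_graph_def)
  next
    case isolated
    then show ?thesis
      using not_connected_graph_if_isolated[OF v u] less.prems(6) by blast
  next
    case mixed
    have "card {u1, u2} \<le> card (V - {v})"
      using mixed less.prems(1) by (intro card_mono) auto
    moreover have "u1 \<noteq> u2"
      using mixed by blast
    ultimately have "2 \<le> card (V - {v})"
      by simp
    moreover have "cograph (V - {v}) R"
      using cograph_subset[OF less.prems(5)] by blast
    ultimately show ?thesis
      using less.hyps[of "V - {v}"] card_V' less.prems(1-6) v mixed
        cograph_remove_vertex_connected[of R V v u1 u2] by auto
  qed
qed

lemma compl_graph_not_connected_join:
  assumes "symp E" "\<not> connected_graph V (compl_graph V E)"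
  obtains L where "L \<subseteq> V" "L \<noteq> {}" "V - L \<noteq> {}" "\<forall>u \<in> L. \<forall>w \<in> V - L. E u w"
proof -
  obtain a where "a \<in> V"
    using assms(2) unfolding connected_graph_def by blast
  let ?L = "component V (compl_graph V E) a"
  have "?L \<subseteq> V"
    unfolding component_def by blast
  show thesis
  proof (rule that)
    show "?L \<subseteq> V" "?L \<noteq> {}"
      using \<open>?L \<subseteq> V\<close> self_in_component[OF \<open>a \<in> V\<close>] by auto
    show "V - ?L \<noteq> {}"
      using not_connected_graph_component[OF symp_compl_graph[OF assms(1)] assms(2) \<open>a \<in> V\<close>]
      by blast
    show "\<forall>u \<in> ?L. \<forall>w \<in> V - ?L. E u w"
      using component_closed[of _ V "compl_graph V E" a] \<open>?L \<subseteq> V\<close>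
      unfolding compl_graph_def by blast
  qed
qed

lemma obtain_subset_with_card_balanced:
  assumes "finite A" "finite B" "A \<inter> B = {}" "n \<le> min (card A) m + min (card B) m"
  obtains S where "S \<subseteq> A \<union> B" "card S = n" "card (S \<inter> A) \<le> m" "card (S \<inter> B) \<le> m"
proof -
  obtain A' where A': "A' \<subseteq> A" "card A' = min (card A) m"
    using obtain_subset_with_card_n[of "min (card A) m" A] by auto
  obtain B' where B': "B' \<subseteq> B" "card B' = min (card B) m"
    using obtain_subset_with_card_n[of "min (card B) m" B] by auto
  have "finite A'" "finite B'"
    using A' B' assms(1,2) finite_subset by blast+
  have "card (A' \<union> B') = card A' + card B'"
    using A' B' assms(3) \<open>finite A'\<close> \<open>finite B'\<close> by (intro card_Un_disjoint) auto
  then obtain S where S: "S \<subseteq> A' \<union> B'" "card S = n"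
    using obtain_subset_with_card_n[of n "A' \<union> B'"] A' B' assms(4) by auto
  have "S \<inter> A \<subseteq> A'" "S \<inter> B \<subseteq> B'"
    using S(1) A' B' assms(3) by blast+
  then have "card (S \<inter> A) \<le> m" "card (S \<inter> B) \<le> m"
    using A' B' \<open>finite A'\<close> \<open>finite B'\<close> by (metis card_mono min.boundedE)+
  then show thesis
    using that S A' B' by blast
qed

lemma k_sparse_compl_graph_across_join:
  assumes "symp E" "finite S" "S \<subseteq> V" and join: "\<forall>u \<in> L. \<forall>w \<in> V - L. E u w"
    and "card (S \<inter> L) \<le> k + 1" "card (S \<inter> (V - L)) \<le> k + 1"
  shows "k_sparse V (compl_graph V E) k S"
  unfolding k_sparse_def
proof (intro conjI ballI)
  fix v assume "v \<in> S"
  define side where "side = (if v \<in> L then S \<inter> L else S \<inter> (V - L))"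
  have "{u \<in> S. compl_graph V E v u} \<subseteq> side - {v}"
    using join \<open>v \<in> S\<close> \<open>S \<subseteq> V\<close> sympD[OF \<open>symp E\<close>]
    unfolding side_def compl_graph_def by auto
  then have "card {u \<in> S. compl_graph V E v u} \<le> card (side - {v})"
    using \<open>finite S\<close> unfolding side_def by (intro card_mono) auto
  also have "\<dots> \<le> k"
    using assms(5,6) \<open>v \<in> S\<close> \<open>S \<subseteq> V\<close> \<open>finite S\<close> unfolding side_def by auto
  finally show "card {u \<in> S. compl_graph V E v u} \<le> k" .
qed (use assms in simp)

lemma k_dense_set_across_join:
  assumes "symp E" "finite V" "L \<subseteq> V" "\<forall>u \<in> L. \<forall>w \<in> V - L. E u w"
    and "n \<le> min (card L) (k + 1) + min (card (V - L)) (k + 1)"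
  obtains S where "k_dense_set V E k n S"
proof -
  obtain S where S: "S \<subseteq> L \<union> (V - L)" "card S = n"
      "card (S \<inter> L) \<le> k + 1" "card (S \<inter> (V - L)) \<le> k + 1"
    by (rule obtain_subset_with_card_balanced[OF _ _ _ assms(5)])
      (use assms(2,3) finite_subset in auto)
  moreover have "S \<subseteq> V"
    using S(1) assms(3) by blast
  moreover from this have "finite S"
    using assms(2) finite_subset by blast
  ultimately have "k_dense_set V E k n S"
    unfolding k_dense_set_def using k_sparse_compl_graph_across_join[OF assms(1)] assms(4)
    by blast
  then show thesis by (rule that)
qed

theorem lemma7p1:
  fixes V :: "'a set" and E :: "'a \<Rightarrow> 'a \<Rightarrow> bool" and k s :: nat
  assumes "simple_graph V E"
    and "1 \<le> s" and "s \<le> k"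
    and "connected_graph V E" and "cograph V E"
    and "card V \<ge> k + s + 2"
    and "\<not> (\<exists>S. k_dense_set V E k (k + s + 2) S)"
  shows "\<exists>L. L \<subseteq> V \<and> 1 \<le> card L \<and> card L \<le> s \<and> (\<forall>u\<in>L. \<forall>v\<in>V - L. E u v)"
proof (rule ccontr)
  assume no_small_side: "\<not> ?thesis"
  have "finite V" "symp E" "irreflp E"
    using assms(1) unfolding simple_graph_def by (auto intro: sympI irreflpI)
  moreover have "2 \<le> card V"
    using assms(6) by linarith
  ultimately have "\<not> connected_graph V (compl_graph V E)"
    using cograph_connected_imp_compl_not_connected assms(4,5) by blast
  then obtain L where L: "L \<subseteq> V" "L \<noteq> {}" "V - L \<noteq> {}" "\<forall>u \<in> L. \<forall>w \<in> V - L. E u w"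
    by (rule compl_graph_not_connected_join[OF \<open>symp E\<close>])
  then have "\<forall>u \<in> V - L. \<forall>w \<in> V - (V - L). E u w"
    using sympD[OF \<open>symp E\<close>] by blast
  moreover have "1 \<le> card L" "1 \<le> card (V - L)"
    using L(1-3) \<open>finite V\<close> by (auto simp: Suc_le_eq card_gt_0_iff finite_subset)
  ultimately have "s < card L" "s < card (V - L)"
    using no_small_side L(1,4) by (meson Diff_subset not_le)+
  moreover have "card L + card (V - L) = card V"
    using L(1) \<open>finite V\<close> by (metis card_Diff_subset card_mono finite_subset le_add_diff_inverse)
  ultimately have "k + s + 2 \<le> min (card L) (k + 1) + min (card (V - L)) (k + 1)"
    using assms(3,6) by linarith
  then obtain S where "k_dense_set V E k (k + s + 2) S"
    by (rule k_dense_set_across_join[OF \<open>symp E\<close> \<open>finite V\<close> L(1,4)])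
  with assms(7) show False by blast
qed

end
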